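(* Let $R$ be a unital ring and $E$ a directed graph. Let $S=M(\mathbb{Z},I)\cup\{0\}$ be a Brandt semigroup over $\mathbb{Z}$ and $w$ a canonical weight mapping on $E$. Then the Leavitt path algebra $L_R(E)$, with the canonical $S$-grading determined by $w$, is nearly epsilon-strongly graded.
   Context: Directed graph $E=(E^0,E^1,\mathrm{r},\mathrm{s})$; paths $E^*$ (finite sequences $\alpha_1\cdots\alpha_k$ of edges with $\mathrm{r}(\alpha_i)=\mathrm{s}(\alpha_{i+1})$, vertices as length-$0$ paths); $\mathrm{Reg}(E)$ = vertices $v$ with $\mathrm{s}^{-1}(v)$ nonempty finite. $L_R(E)$ is the $R$-algebra generated by $E^0$, $E^1$, $\{\alpha^*\}$ ($R$ commuting with generators) subject to $vv'=\delta_{v,v'}v$; $\mathrm{s}(\alpha)\alpha=\alpha\mathrm{r}(\alpha)=\alpha$, $\mathrm{r}(\alpha)\alpha^*=\alpha^*\mathrm{s}(\alpha)=\alpha^*$; $\alpha^*\alpha'=\delta_{\alpha,\alpha'}\mathrm{r}(\alpha)$; $\sum_{\mathrm{s}(\alpha)=v}\alpha\alpha^*=v$ for $v\in\mathrm{Reg}(E)$. $\mu^*=\alpha_k^*\cdots\alpha_1^*$, $v^*=v$. $M(\mathbb{Z},I)=I\times\mathbb{Z}\times I$ with $(i,a,j)(k,b,l)=(i,a+b,l)$ if $j=k$, else undefined; $S=M(\mathbb{Z},I)\cup\{0\}$ with undefined products $0$, $0$ absorbing; $(i,a,j)^{-1}=(j,-a,i)$. Canonical weight mapping: $w$ assigns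 to each vertex a weight $(i,0,i)$, to each edge a weight $(i,1,j)$, $w(\alpha^* )=w(\alpha)^{-1}$, $w(\mathrm{s}(\alpha))w(\alpha)=w(\alpha)=w(\alpha)w(\mathrm{r}(\alpha))$; for each nonzero idempotent $e$, all edges with source of weight $e$ have equal weight and all edges with range of weight $e$ have equal weight; extended by $w(\alpha_1\cdots\alpha_k)=\prod w(\alpha_i)$, $w(\mu\eta^* )=w(\mu)w(\eta)^{-1}$. Canonical $S$-grading: $(L_R(E))_s$ = $R$-span of $\mu\eta^*$ with $\mathrm{r}(\mu)=\mathrm{r}(\eta)$, $w(\mu\eta^* )=s$; $(L_R(E))_0=0$. For an $S$-graded ring $A=\bigoplus A_s$: $A_sA_t$ is the additive subgroup generated by products. $A$ is nearly epsilon-strongly graded if $S$ is cancellative ($0\ne su=tu$ or $0\ne us=ut$ implies $s=t$), satisfies (LRI) (every $s$ has $s^{-1}$ and idempotents $e,f$ with $es=sf=s$, $fs^{-1}=s^{-1}e=s^{-1}$, $ss^{-1}=e$, $s^{-1}s=f$), and for every $s$ and $x\in A_s$ there exist $\epsilon(x)\in A_sA_{s^{-1}}$, $\epsilon'(x)\in A_{s^{-1}}A_s$ with $\epsilon(x)x=x=x\epsilon'(x)$. *)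

theory Defs
  imports Main
begin

datatype 'i brandt = BZero | Br 'i int 'i

fun bmult :: "'i brandt \<Rightarrow> 'i brandt \<Rightarrow> 'i brandt" where
  "bmult (Br i a j) (Br k b l) = (if j = k then Br i (a + b) l else BZero)"
| "bmult _ _ = BZero"

fun binv :: "'i brandt \<Rightarrow> 'i brandt" where
  "binv (Br i a j) = Br j (- a) i"
| "binv BZero = BZero"

definition s_cancellative :: "('s \<Rightarrow> 's \<Rightarrow> 's) \<Rightarrow> 's \<Rightarrow> bool" where
  "s_cancellative sm sz \<longleftrightarrow>
     (\<forall>s t u. (sm s u \<noteq> sz \<and> sm s u = sm t u \<longrightarrow> s = t) \<and>
              (sm u s \<noteq> sz \<and> sm u s = sm u t \<longrightarrow> s = t))"

definition s_LRI :: "('s \<Rightarrow> 's \<Rightarrow> 's) \<Rightarrow> ('s \<Rightarrow> 's) \<Rightarrow> bool" where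
  "s_LRI sm si \<longleftrightarrow>
     (\<forall>s. \<exists>e f. sm e e = e \<and> sm f f = f \<and> sm e s = s \<and> sm s f = s \<and>
               sm f (si s) = si s \<and> sm (si s) e = si s \<and>
               sm s (si s) = e \<and> sm (si s) s = f)"

inductive_set add_subgroup_gen :: "('a \<Rightarrow> 'a \<Rightarrow> 'a) \<Rightarrow> ('a \<Rightarrow> 'a) \<Rightarrow> 'a \<Rightarrow> 'a set \<Rightarrow> 'a set"
  for add neg z P where
  asg_zero: "z \<in> add_subgroup_gen add neg z P"
| asg_gen: "x \<in> P \<Longrightarrow> x \<in> add_subgroup_gen add neg z P"
| asg_add: "x \<in> add_subgroup_gen add neg z P \<Longrightarrow> y \<in> add_subgroup_gen add neg z P
            \<Longrightarrow> add x y \<in> add_subgroup_gen add neg z P"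
| asg_neg: "x \<in> add_subgroup_gen add neg z P \<Longrightarrow> neg x \<in> add_subgroup_gen add neg z P"

definition comp_prod :: "('a \<Rightarrow> 'a \<Rightarrow> 'a) \<Rightarrow> ('a \<Rightarrow> 'a \<Rightarrow> 'a) \<Rightarrow> ('a \<Rightarrow> 'a) \<Rightarrow> 'a
     \<Rightarrow> 'a set \<Rightarrow> 'a set \<Rightarrow> 'a set" where
  "comp_prod add mul neg z As At = add_subgroup_gen add neg z {mul x y | x y. x \<in> As \<and> y \<in> At}"

definition nearly_eps_graded ::
  "('s \<Rightarrow> 's \<Rightarrow> 's) \<Rightarrow> 's \<Rightarrow> ('s \<Rightarrow> 's) \<Rightarrow>
   ('a \<Rightarrow> 'a \<Rightarrow> 'a) \<Rightarrow> ('a \<Rightarrow> 'a \<Rightarrow> 'a) \<Rightarrow> ('a \<Rightarrow> 'a) \<Rightarrow> 'a \<Rightarrow> ('s \<Rightarrow> 'a set) \<Rightarrow> bool" where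
  "nearly_eps_graded sm sz si add mul neg z A \<longleftrightarrow>
     s_cancellative sm sz \<and> s_LRI sm si \<and>
     (\<forall>s. \<forall>x\<in>A s.
        (\<exists>e\<in>comp_prod add mul neg z (A s) (A (si s)). mul e x = x) \<and>
        (\<exists>e'\<in>comp_prod add mul neg z (A (si s)) (A s). mul x e' = x))"

datatype ('v, 'e) gen = GV 'v | GE 'e | GS 'e   \<comment> \<open>vertex, edge, ghost edge alpha*\<close>

type_synonym ('v, 'e, 'r) fa = "('v, 'e) gen list \<Rightarrow> 'r"

definition gens :: "'v set \<Rightarrow> 'e set \<Rightarrow> ('v, 'e) gen set" where
  "gens V Ed = GV ` V \<union> GE ` Ed \<union> GS ` Ed"

text \<open>Finitely supported R-linear combinations of nonempty words in the generators.\<close>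
definition fa_carrier :: "'v set \<Rightarrow> 'e set \<Rightarrow> ('v, 'e, 'r::ring_1) fa set" where
  "fa_carrier V Ed = {f. finite {w. f w \<noteq> 0} \<and> f [] = 0 \<and>
                          (\<forall>w. f w \<noteq> 0 \<longrightarrow> set w \<subseteq> gens V Ed)}"

definition fa_zero :: "('v, 'e, 'r::ring_1) fa" where "fa_zero = (\<lambda>w. 0)"
definition fa_add :: "('v, 'e, 'r::ring_1) fa \<Rightarrow> ('v, 'e, 'r) fa \<Rightarrow> ('v, 'e, 'r) fa" where
  "fa_add f g = (\<lambda>w. f w + g w)"
definition fa_neg :: "('v, 'e, 'r::ring_1) fa \<Rightarrow> ('v, 'e, 'r) fa" where
  "fa_neg f = (\<lambda>w. - f w)"
definition fa_sub :: "('v, 'e, 'r::ring_1) fa \<Rightarrow> ('v, 'e, 'r) fa \<Rightarrow> ('v, 'e, 'r) fa" where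
  "fa_sub f g = (\<lambda>w. f w - g w)"
definition fa_mult :: "('v, 'e, 'r::ring_1) fa \<Rightarrow> ('v, 'e, 'r) fa \<Rightarrow> ('v, 'e, 'r) fa" where
  "fa_mult f g = (\<lambda>w. \<Sum>i\<le>length w. f (take i w) * g (drop i w))"
definition fa_lsmul :: "'r::ring_1 \<Rightarrow> ('v, 'e, 'r) fa \<Rightarrow> ('v, 'e, 'r) fa" where
  "fa_lsmul c f = (\<lambda>w. c * f w)"
definition fa_rsmul :: "('v, 'e, 'r::ring_1) fa \<Rightarrow> 'r \<Rightarrow> ('v, 'e, 'r) fa" where
  "fa_rsmul f c = (\<lambda>w. f w * c)"
definition mono :: "('v, 'e) gen list \<Rightarrow> 'r::ring_1 \<Rightarrow> ('v, 'e, 'r) fa" where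
  "mono w c = (\<lambda>u. if u = w then c else 0)"

definition lpa_reg :: "'v set \<Rightarrow> 'e set \<Rightarrow> ('e \<Rightarrow> 'v) \<Rightarrow> 'v set" where
  "lpa_reg V Ed s = {v \<in> V. {a \<in> Ed. s a = v} \<noteq> {} \<and> finite {a \<in> Ed. s a = v}}"

definition lpa_rels :: "'v set \<Rightarrow> 'e set \<Rightarrow> ('e \<Rightarrow> 'v) \<Rightarrow> ('e \<Rightarrow> 'v) \<Rightarrow> ('v, 'e, 'r::ring_1) fa set" where
  "lpa_rels V Ed s r =
     {fa_sub (mono [GV v, GV v'] 1) (if v = v' then mono [GV v] 1 else fa_zero) | v v'. v \<in> V \<and> v' \<in> V}
   \<union> {fa_sub (mono [GV (s a), GE a] 1) (mono [GE a] 1) | a. a \<in> Ed}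
   \<union> {fa_sub (mono [GE a, GV (r a)] 1) (mono [GE a] 1) | a. a \<in> Ed}
   \<union> {fa_sub (mono [GV (r a), GS a] 1) (mono [GS a] 1) | a. a \<in> Ed}
   \<union> {fa_sub (mono [GS a, GV (s a)] 1) (mono [GS a] 1) | a. a \<in> Ed}
   \<union> {fa_sub (mono [GS a, GE a'] 1) (if a = a' then mono [GV (r a)] 1 else fa_zero) | a a'. a \<in> Ed \<and> a' \<in> Ed}
   \<union> {fa_sub (\<lambda>w. \<Sum>a\<in>{a \<in> Ed. s a = v}. mono [GE a, GS a] 1 w) (mono [GV v] 1) | v. v \<in> lpa_reg V Ed s}"

inductive_set lpa_ideal :: "'v set \<Rightarrow> 'e set \<Rightarrow> ('e \<Rightarrow> 'v) \<Rightarrow> ('e \<Rightarrow> 'v) \<Rightarrow> ('v, 'e, 'r::ring_1) fa set"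
  for V Ed s r where
  li_rel: "f \<in> lpa_rels V Ed s r \<Longrightarrow> f \<in> lpa_ideal V Ed s r"
| li_zero: "fa_zero \<in> lpa_ideal V Ed s r"
| li_add: "f \<in> lpa_ideal V Ed s r \<Longrightarrow> g \<in> lpa_ideal V Ed s r \<Longrightarrow> fa_add f g \<in> lpa_ideal V Ed s r"
| li_lsmul: "f \<in> lpa_ideal V Ed s r \<Longrightarrow> fa_lsmul c f \<in> lpa_ideal V Ed s r"
| li_rsmul: "f \<in> lpa_ideal V Ed s r \<Longrightarrow> fa_rsmul f c \<in> lpa_ideal V Ed s r"
| li_lmult: "a \<in> fa_carrier V Ed \<Longrightarrow> f \<in> lpa_ideal V Ed s r \<Longrightarrow> fa_mult a f \<in> lpa_ideal V Ed s r"
| li_rmult: "a \<in> fa_carrier V Ed \<Longrightarrow> f \<in> lpa_ideal V Ed s r \<Longrightarrow> fa_mult f a \<in> lpa_ideal V Ed s r"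

text \<open>Elements of L_R(E) are the cosets f + J (J = lpa_ideal) of elements f of the free algebra.\<close>
definition lpa_class :: "'v set \<Rightarrow> 'e set \<Rightarrow> ('e \<Rightarrow> 'v) \<Rightarrow> ('e \<Rightarrow> 'v) \<Rightarrow> ('v, 'e, 'r::ring_1) fa
    \<Rightarrow> ('v, 'e, 'r) fa set" where
  "lpa_class V Ed s r f = {g \<in> fa_carrier V Ed. fa_sub g f \<in> lpa_ideal V Ed s r}"

definition lpa_carrier :: "'v set \<Rightarrow> 'e set \<Rightarrow> ('e \<Rightarrow> 'v) \<Rightarrow> ('e \<Rightarrow> 'v) \<Rightarrow> ('v, 'e, 'r::ring_1) fa set set" where
  "lpa_carrier V Ed s r = lpa_class V Ed s r ` fa_carrier V Ed"

definition rep :: "'a set \<Rightarrow> 'a" where "rep X = (SOME f. f \<in> X)"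

definition lpa_zero :: "'v set \<Rightarrow> 'e set \<Rightarrow> ('e \<Rightarrow> 'v) \<Rightarrow> ('e \<Rightarrow> 'v) \<Rightarrow> ('v, 'e, 'r::ring_1) fa set" where
  "lpa_zero V Ed s r = lpa_class V Ed s r fa_zero"
definition lpa_add :: "'v set \<Rightarrow> 'e set \<Rightarrow> ('e \<Rightarrow> 'v) \<Rightarrow> ('e \<Rightarrow> 'v)
    \<Rightarrow> ('v, 'e, 'r::ring_1) fa set \<Rightarrow> ('v, 'e, 'r) fa set \<Rightarrow> ('v, 'e, 'r) fa set" where
  "lpa_add V Ed s r X Y = lpa_class V Ed s r (fa_add (rep X) (rep Y))"
definition lpa_neg :: "'v set \<Rightarrow> 'e set \<Rightarrow> ('e \<Rightarrow> 'v) \<Rightarrow> ('e \<Rightarrow> 'v)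
    \<Rightarrow> ('v, 'e, 'r::ring_1) fa set \<Rightarrow> ('v, 'e, 'r) fa set" where
  "lpa_neg V Ed s r X = lpa_class V Ed s r (fa_neg (rep X))"
definition lpa_mult :: "'v set \<Rightarrow> 'e set \<Rightarrow> ('e \<Rightarrow> 'v) \<Rightarrow> ('e \<Rightarrow> 'v)
    \<Rightarrow> ('v, 'e, 'r::ring_1) fa set \<Rightarrow> ('v, 'e, 'r) fa set \<Rightarrow> ('v, 'e, 'r) fa set" where
  "lpa_mult V Ed s r X Y = lpa_class V Ed s r (fa_mult (rep X) (rep Y))"

datatype ('v, 'e) path = PV 'v | PE "'e list"   \<comment> \<open>length-0 path (vertex) or nonempty edge list\<close>

fun is_path :: "'v set \<Rightarrow> 'e set \<Rightarrow> ('e \<Rightarrow> 'v) \<Rightarrow> ('e \<Rightarrow> 'v) \<Rightarrow> ('v, 'e) path \<Rightarrow> bool" where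
  "is_path V Ed s r (PV v) \<longleftrightarrow> v \<in> V"
| "is_path V Ed s r (PE es) \<longleftrightarrow> es \<noteq> [] \<and> set es \<subseteq> Ed \<and>
      (\<forall>i. Suc i < length es \<longrightarrow> r (es ! i) = s (es ! Suc i))"

fun p_range :: "('e \<Rightarrow> 'v) \<Rightarrow> ('v, 'e) path \<Rightarrow> 'v" where
  "p_range r (PV v) = v"
| "p_range r (PE es) = r (last es)"

fun p_word :: "('v, 'e) path \<Rightarrow> ('v, 'e) gen list" where
  "p_word (PV v) = [GV v]"
| "p_word (PE es) = map GE es"

fun p_ghost_word :: "('v, 'e) path \<Rightarrow> ('v, 'e) gen list" where
  "p_ghost_word (PV v) = [GV v]"
| "p_ghost_word (PE es) = rev (map GS es)"

fun edges_weight :: "('e \<Rightarrow> 'i brandt) \<Rightarrow> 'e list \<Rightarrow> 'i brandt" where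
  "edges_weight we [] = BZero"
| "edges_weight we [a] = we a"
| "edges_weight we (a # b # l) = bmult (we a) (edges_weight we (b # l))"

fun p_weight :: "('v \<Rightarrow> 'i brandt) \<Rightarrow> ('e \<Rightarrow> 'i brandt) \<Rightarrow> ('v, 'e) path \<Rightarrow> 'i brandt" where
  "p_weight wv we (PV v) = wv v"
| "p_weight wv we (PE es) = edges_weight we es"

definition canonical_weight :: "'v set \<Rightarrow> 'e set \<Rightarrow> ('e \<Rightarrow> 'v) \<Rightarrow> ('e \<Rightarrow> 'v)
    \<Rightarrow> ('v \<Rightarrow> 'i brandt) \<Rightarrow> ('e \<Rightarrow> 'i brandt) \<Rightarrow> bool" where
  "canonical_weight V Ed s r wv we \<longleftrightarrow>
     (\<forall>v\<in>V. \<exists>i. wv v = Br i 0 i) \<and>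
     (\<forall>a\<in>Ed. \<exists>i j. we a = Br i 1 j) \<and>
     (\<forall>a\<in>Ed. bmult (wv (s a)) (we a) = we a \<and> bmult (we a) (wv (r a)) = we a) \<and>
     (\<forall>e. e \<noteq> BZero \<and> bmult e e = e \<longrightarrow>
        (\<forall>a\<in>Ed. \<forall>b\<in>Ed. wv (s a) = e \<and> wv (s b) = e \<longrightarrow> we a = we b) \<and>
        (\<forall>a\<in>Ed. \<forall>b\<in>Ed. wv (r a) = e \<and> wv (r b) = e \<longrightarrow> we a = we b))"

text \<open>R-span (in the free algebra) of the words mu eta* with r(mu) = r(eta) and weight sigma;
  empty (only 0) for sigma = 0.\<close>
inductive_set lpa_span :: "'v set \<Rightarrow> 'e set \<Rightarrow> ('e \<Rightarrow> 'v) \<Rightarrow> ('e \<Rightarrow> 'v)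
    \<Rightarrow> ('v \<Rightarrow> 'i brandt) \<Rightarrow> ('e \<Rightarrow> 'i brandt) \<Rightarrow> 'i brandt \<Rightarrow> ('v, 'e, 'r::ring_1) fa set"
  for V Ed s r wv we \<sigma> where
  ls_zero: "fa_zero \<in> lpa_span V Ed s r wv we \<sigma>"
| ls_step: "\<sigma> \<noteq> BZero \<Longrightarrow> is_path V Ed s r \<mu> \<Longrightarrow> is_path V Ed s r \<eta> \<Longrightarrow> p_range r \<mu> = p_range r \<eta>
     \<Longrightarrow> bmult (p_weight wv we \<mu>) (binv (p_weight wv we \<eta>)) = \<sigma>
     \<Longrightarrow> f \<in> lpa_span V Ed s r wv we \<sigma>
     \<Longrightarrow> fa_add (mono (p_word \<mu> @ p_ghost_word \<eta>) c) f \<in> lpa_span V Ed s r wv we \<sigma>"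

definition lpa_comp :: "'v set \<Rightarrow> 'e set \<Rightarrow> ('e \<Rightarrow> 'v) \<Rightarrow> ('e \<Rightarrow> 'v)
    \<Rightarrow> ('v \<Rightarrow> 'i brandt) \<Rightarrow> ('e \<Rightarrow> 'i brandt) \<Rightarrow> 'i brandt \<Rightarrow> ('v, 'e, 'r::ring_1) fa set set" where
  "lpa_comp V Ed s r wv we \<sigma> = lpa_class V Ed s r ` lpa_span V Ed s r wv we \<sigma>"

end

theory Submission
  imports Defs
begin

(* Write x in the component of weight sigma as a finite sum of terms c_i mu_i eta_i* and
   consider those paths mu_i that are minimal for the prefix order. For such an m choose eta
   with m eta* homogeneous; the product of m eta* and eta m* is m m*, so it lies in
   A_sigma A_sigma^-1. Every mu_i has exactly one minimal prefix m0, and then m0 m0* mu_i = mu_i,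
   while m* mu_i = 0 for every other minimal m, because m and mu_i are incomparable. Hence the
   sum of the m m* is a left unit for x; a right unit is built in the same way from the eta_i. *)

section \<open>The Brandt semigroup\<close>

lemma bmult_cancellative: "s_cancellative bmult BZero"
  unfolding s_cancellative_def
proof (intro allI conjI impI)
  fix s t u :: "'i brandt"
  show "bmult s u \<noteq> BZero \<and> bmult s u = bmult t u \<Longrightarrow> s = t"
    and "bmult u s \<noteq> BZero \<and> bmult u s = bmult u t \<Longrightarrow> s = t"
    by (cases s; cases t; cases u; auto split: if_splits)+
qed

lemma bmult_LRI: "s_LRI bmult binv"
  unfolding s_LRI_def
proof
  fix x :: "'i brandt"
  show "\<exists>e f. bmult e e = e \<and> bmult f f = f \<and> bmult e x = x \<and> bmult x f = x \<and>
               bmult f (binv x) = binv x \<and> bmult (binv x) e = binv x \<and>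
               bmult x (binv x) = e \<and> bmult (binv x) x = f"
  proof (cases x)
    case BZero
    then show ?thesis by simp
  next
    case (Br i a j)
    then show ?thesis by (intro exI[of _ "Br i 0 i"] exI[of _ "Br j 0 j"]) simp
  qed
qed

lemma binv_binv [simp]: "binv (binv x) = x"
  by (cases x) simp_all

lemma binv_bmult_binv:
  "bmult a (binv b) \<noteq> BZero \<Longrightarrow> binv (bmult a (binv b)) = bmult b (binv a)"
  by (cases a; cases b) auto

section \<open>The free algebra on the graph generators\<close>

lemma fa_mult_mono: "fa_mult (mono u c) (mono w d) = mono (u @ w) (c * d)"
proof
  fix z
  have "fa_mult (mono u c) (mono w d) z =
      (\<Sum>i\<le>length z. if i = length u \<and> z = u @ w then c * d else 0)"
    unfolding fa_mult_def mono_def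
  proof (rule sum.cong [OF refl])
    fix i assume "i \<in> {..length z}"
    then have "take i z = u \<and> drop i z = w \<longleftrightarrow> i = length u \<and> z = u @ w"
      by (metis append_eq_conv_conj append_take_drop_id atMost_iff length_take min.absorb2)
    then show "(if take i z = u then c else 0) * (if drop i z = w then d else 0) =
        (if i = length u \<and> z = u @ w then c * d else 0)"
      by auto
  qed
  also have "\<dots> = mono (u @ w) (c * d) z"
    by (auto simp: mono_def)
  finally show "fa_mult (mono u c) (mono w d) z = mono (u @ w) (c * d) z" .
qed

lemma fa_mult_sub_left: "fa_mult (fa_sub f g) h = fa_sub (fa_mult f h) (fa_mult g h)"
  by (rule ext) (simp add: fa_mult_def fa_sub_def left_diff_distrib sum_subtractf)

lemma fa_mult_sub_right: "fa_mult h (fa_sub f g) = fa_sub (fa_mult h f) (fa_mult h g)"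
  by (rule ext) (simp add: fa_mult_def fa_sub_def right_diff_distrib sum_subtractf)

lemma mono_eq_lsmul: "mono u c = fa_lsmul c (mono u 1)"
  by (rule ext) (simp add: mono_def fa_lsmul_def)

definition fa_sum :: "'a set \<Rightarrow> ('a \<Rightarrow> ('v, 'e, 'r::ring_1) fa) \<Rightarrow> ('v, 'e, 'r) fa" where
  "fa_sum P g = (\<lambda>w. \<Sum>m\<in>P. g m w)"

lemma fa_sum_empty [simp]: "fa_sum {} g = fa_zero"
  by (simp add: fa_sum_def fa_zero_def)

lemma fa_sum_insert: "finite F \<Longrightarrow> x \<notin> F \<Longrightarrow> fa_sum (insert x F) g = fa_add (g x) (fa_sum F g)"
  by (rule ext) (simp add: fa_sum_def fa_add_def)

lemma fa_sum_cong: "(\<And>m. m \<in> P \<Longrightarrow> g m = h m) \<Longrightarrow> fa_sum P g = fa_sum P h"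
  unfolding fa_sum_def by (rule ext) (rule sum.cong, auto)

lemma fa_mult_sum_left: "fa_mult (fa_sum P g) h = fa_sum P (\<lambda>m. fa_mult (g m) h)"
  by (rule ext) (simp add: fa_sum_def fa_mult_def sum_distrib_right sum.swap [of _ P])

lemma fa_mult_sum_right: "fa_mult h (fa_sum P g) = fa_sum P (\<lambda>m. fa_mult h (g m))"
  by (rule ext) (simp add: fa_sum_def fa_mult_def sum_distrib_left sum.swap [of _ P])

lemma fa_sum_single:
  assumes "finite P" "m0 \<in> P" "\<And>m. m \<in> P \<Longrightarrow> m \<noteq> m0 \<Longrightarrow> g m = fa_zero"
  shows "fa_sum P g = g m0"
proof
  fix w
  have "(\<Sum>m\<in>P. g m w) = g m0 w + (\<Sum>m\<in>P - {m0}. g m w)"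
    using assms(1,2) by (simp add: sum.remove)
  also have "(\<Sum>m\<in>P - {m0}. g m w) = 0"
    using assms(3) by (intro sum.neutral) (auto simp: fa_zero_def)
  finally show "fa_sum P g w = g m0 w" by (simp add: fa_sum_def)
qed

lemma fa_zero_carrier [simp]: "fa_zero \<in> fa_carrier V Ed"
  by (simp add: fa_carrier_def fa_zero_def)

lemma fa_add_carrier:
  assumes f: "f \<in> fa_carrier V Ed" and g: "g \<in> fa_carrier V Ed"
  shows "fa_add f g \<in> fa_carrier V Ed"
proof -
  have "{w. fa_add f g w \<noteq> 0} \<subseteq> {w. f w \<noteq> 0} \<union> {w. g w \<noteq> 0}"
    by (auto simp: fa_add_def)
  then have "finite {w. fa_add f g w \<noteq> 0}"
    using f g by (auto simp: fa_carrier_def intro: finite_subset)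
  moreover have "set w \<subseteq> gens V Ed" if "fa_add f g w \<noteq> 0" for w
    using that f g by (cases "f w = 0") (auto simp: fa_carrier_def fa_add_def)
  ultimately show ?thesis
    using f g by (simp add: fa_carrier_def fa_add_def)
qed

lemma mono_carrier: "u \<noteq> [] \<Longrightarrow> set u \<subseteq> gens V Ed \<Longrightarrow> mono u c \<in> fa_carrier V Ed"
proof -
  assume "u \<noteq> []" "set u \<subseteq> gens V Ed"
  moreover have "{w. mono u c w \<noteq> 0} \<subseteq> {u}" by (auto simp: mono_def)
  ultimately show ?thesis
    by (auto simp: fa_carrier_def mono_def intro: finite_subset)
qed

lemma fa_mult_carrier:
  assumes f: "f \<in> fa_carrier V Ed" and g: "g \<in> fa_carrier V Ed"
  shows "fa_mult f g \<in> fa_carrier V Ed"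
proof -
  have factor: "\<exists>i. f (take i w) \<noteq> 0 \<and> g (drop i w) \<noteq> 0" if "fa_mult f g w \<noteq> 0" for w
  proof -
    from that obtain i where "f (take i w) * g (drop i w) \<noteq> 0"
      unfolding fa_mult_def by (meson sum.not_neutral_contains_not_neutral)
    then show ?thesis by (metis mult_zero_left mult_zero_right)
  qed
  have "{w. fa_mult f g w \<noteq> 0} \<subseteq> (\<lambda>(u, v). u @ v) ` ({w. f w \<noteq> 0} \<times> {w. g w \<noteq> 0})"
  proof
    fix w assume "w \<in> {w. fa_mult f g w \<noteq> 0}"
    then obtain i where "f (take i w) \<noteq> 0 \<and> g (drop i w) \<noteq> 0" using factor by auto
    then show "w \<in> (\<lambda>(u, v). u @ v) ` ({w. f w \<noteq> 0} \<times> {w. g w \<noteq> 0})"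
      by (intro image_eqI [where x = "(take i w, drop i w)"]) auto
  qed
  moreover have "finite ((\<lambda>(u, v). u @ v) ` ({w. f w \<noteq> 0} \<times> {w. g w \<noteq> 0}))"
    using f g by (auto simp: fa_carrier_def)
  ultimately have "finite {w. fa_mult f g w \<noteq> 0}" by (rule finite_subset)
  moreover have "fa_mult f g [] = 0"
    using f by (simp add: fa_mult_def fa_carrier_def)
  moreover have "set w \<subseteq> gens V Ed" if nz: "fa_mult f g w \<noteq> 0" for w
  proof -
    obtain i where "f (take i w) \<noteq> 0 \<and> g (drop i w) \<noteq> 0" using factor [OF nz] by blast
    then have "set (take i w) \<subseteq> gens V Ed" "set (drop i w) \<subseteq> gens V Ed"
      using f g by (auto simp: fa_carrier_def)
    then show ?thesis by (metis append_take_drop_id set_append le_sup_iff)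
  qed
  ultimately show ?thesis by (simp add: fa_carrier_def)
qed

lemma fa_sum_carrier:
  "finite P \<Longrightarrow> (\<And>m. m \<in> P \<Longrightarrow> g m \<in> fa_carrier V Ed) \<Longrightarrow> fa_sum P g \<in> fa_carrier V Ed"
  by (induction P rule: finite_induct) (auto simp: fa_sum_insert fa_add_carrier)

section \<open>Paths\<close>

fun p_source :: "('e \<Rightarrow> 'v) \<Rightarrow> ('v, 'e) path \<Rightarrow> 'v" where
  "p_source s (PV v) = v"
| "p_source s (PE es) = s (hd es)"

fun path_prefix :: "('e \<Rightarrow> 'v) \<Rightarrow> ('v, 'e) path \<Rightarrow> ('v, 'e) path \<Rightarrow> bool" where
  "path_prefix s (PV v) (PV v') \<longleftrightarrow> v = v'"
| "path_prefix s (PV v) (PE es) \<longleftrightarrow> s (hd es) = v"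
| "path_prefix s (PE es) (PV v) \<longleftrightarrow> False"
| "path_prefix s (PE es) (PE es') \<longleftrightarrow> (\<exists>t. es' = es @ t)"

fun p_length :: "('v, 'e) path \<Rightarrow> nat" where
  "p_length (PV v) = 0"
| "p_length (PE es) = length es"

lemma is_path_Cons_Cons:
  "is_path V Ed s r (PE (a # b # l)) \<longleftrightarrow> a \<in> Ed \<and> r a = s b \<and> is_path V Ed s r (PE (b # l))"
proof -
  have "(\<forall>i. P i) \<longleftrightarrow> P 0 \<and> (\<forall>i. P (Suc i))" for P :: "nat \<Rightarrow> bool"
    by (metis not0_implies_Suc)
  from this [of "\<lambda>i. Suc i < length (a # b # l) \<longrightarrow> r ((a # b # l) ! i) = s ((a # b # l) ! Suc i)"]
  show ?thesis by auto
qed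

definition path_projection :: "('v, 'e) path set \<Rightarrow> ('v, 'e, 'r::ring_1) fa" where
  "path_projection P = fa_sum P (\<lambda>m. mono (p_word m @ p_ghost_word m) 1)"

section \<open>Congruence modulo the Leavitt path algebra relations\<close>

locale lpa_graph =
  fixes V :: "'v set" and Ed :: "'e set" and s r :: "'e \<Rightarrow> 'v"
  assumes source_in_V: "s ` Ed \<subseteq> V"
begin

abbreviation C where "C \<equiv> fa_carrier V Ed"
abbreviation J where "J \<equiv> lpa_ideal V Ed s r"
abbreviation G where "G \<equiv> gens V Ed"
abbreviation cls where "cls \<equiv> lpa_class V Ed s r"
abbreviation gpath where "gpath \<equiv> is_path V Ed s r"
abbreviation comp_prod_lpa where
  "comp_prod_lpa \<equiv> comp_prod (lpa_add V Ed s r) (lpa_mult V Ed s r) (lpa_neg V Ed s r) (lpa_zero V Ed s r)"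

definition lpa_cong :: "('v, 'e, 'r::ring_1) fa \<Rightarrow> ('v, 'e, 'r) fa \<Rightarrow> bool" where
  "lpa_cong f g \<longleftrightarrow> fa_sub f g \<in> J"

lemma lpa_cong_refl: "lpa_cong f f"
  using lpa_ideal.li_zero [of V Ed s r] by (simp add: lpa_cong_def fa_sub_def fa_zero_def)

lemma lpa_cong_sym: "lpa_cong f g \<Longrightarrow> lpa_cong g f"
  using lpa_ideal.li_lsmul [of "fa_sub f g" V Ed s r "-1"]
  by (simp add: lpa_cong_def fa_sub_def fa_lsmul_def)

lemma lpa_cong_trans [trans]: "lpa_cong f g \<Longrightarrow> lpa_cong g h \<Longrightarrow> lpa_cong f h"
  using lpa_ideal.li_add [of "fa_sub f g" V Ed s r "fa_sub g h"]
  by (simp add: lpa_cong_def fa_sub_def fa_add_def)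

lemma lpa_cong_add: "lpa_cong f f' \<Longrightarrow> lpa_cong g g' \<Longrightarrow> lpa_cong (fa_add f g) (fa_add f' g')"
  using lpa_ideal.li_add [of "fa_sub f f'" V Ed s r "fa_sub g g'"]
  by (simp add: lpa_cong_def fa_sub_def fa_add_def algebra_simps)

lemma lpa_cong_lsmul: "lpa_cong f g \<Longrightarrow> lpa_cong (fa_lsmul c f) (fa_lsmul c g)"
  using lpa_ideal.li_lsmul [of "fa_sub f g" V Ed s r c]
  by (simp add: lpa_cong_def fa_sub_def fa_lsmul_def right_diff_distrib)

lemma lpa_cong_mult_left: "a \<in> C \<Longrightarrow> lpa_cong f g \<Longrightarrow> lpa_cong (fa_mult a f) (fa_mult a g)"
  unfolding lpa_cong_def fa_mult_sub_right [symmetric] by (rule lpa_ideal.li_lmult)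

lemma lpa_cong_mult_right: "a \<in> C \<Longrightarrow> lpa_cong f g \<Longrightarrow> lpa_cong (fa_mult f a) (fa_mult g a)"
  unfolding lpa_cong_def fa_mult_sub_left [symmetric] by (rule lpa_ideal.li_rmult)

lemma lpa_cong_sum:
  "finite P \<Longrightarrow> (\<And>m. m \<in> P \<Longrightarrow> lpa_cong (g m) (h m)) \<Longrightarrow> lpa_cong (fa_sum P g) (fa_sum P h)"
  by (induction P rule: finite_induct) (auto simp: fa_sum_insert lpa_cong_add lpa_cong_refl)

lemma lpa_cong_zero_iff: "lpa_cong f fa_zero \<longleftrightarrow> f \<in> J"
  by (simp add: lpa_cong_def fa_sub_def fa_zero_def)

lemma lpa_cong_sum_single:
  assumes "finite P" "m0 \<in> P" "\<And>m. m \<in> P \<Longrightarrow> m \<noteq> m0 \<Longrightarrow> g m \<in> J" "lpa_cong (g m0) f"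
  shows "lpa_cong (fa_sum P g) f"
proof -
  have "lpa_cong (fa_sum P g) (fa_sum P (\<lambda>m. if m = m0 then f else fa_zero))"
    using assms by (intro lpa_cong_sum) (auto simp: lpa_cong_zero_iff)
  also have "fa_sum P (\<lambda>m. if m = m0 then f else fa_zero) = f"
    using fa_sum_single [OF assms(1,2), of "\<lambda>m. if m = m0 then f else fa_zero"] by simp
  finally show ?thesis .
qed

lemma lpa_class_conv: "cls f = {h \<in> C. lpa_cong h f}"
  by (simp add: lpa_class_def lpa_cong_def)

lemma lpa_class_eq: "lpa_cong f g \<Longrightarrow> cls f = cls g"
  unfolding lpa_class_conv by (metis lpa_cong_sym lpa_cong_trans)

lemma rep_lpa_class: "f \<in> C \<Longrightarrow> rep (cls f) \<in> C \<and> lpa_cong (rep (cls f)) f"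
proof -
  assume "f \<in> C"
  then have "f \<in> cls f" by (simp add: lpa_class_conv lpa_cong_refl)
  then have "rep (cls f) \<in> cls f" unfolding rep_def by (metis someI)
  then show ?thesis by (simp add: lpa_class_conv)
qed

lemma lpa_add_class: "f \<in> C \<Longrightarrow> g \<in> C \<Longrightarrow> lpa_add V Ed s r (cls f) (cls g) = cls (fa_add f g)"
  unfolding lpa_add_def by (intro lpa_class_eq lpa_cong_add) (simp_all add: rep_lpa_class)

lemma lpa_mult_class: "f \<in> C \<Longrightarrow> g \<in> C \<Longrightarrow> lpa_mult V Ed s r (cls f) (cls g) = cls (fa_mult f g)"
proof -
  assume f: "f \<in> C" and g: "g \<in> C"
  let ?f = "rep (cls f)" and ?g = "rep (cls g)"
  have "lpa_cong (fa_mult ?f ?g) (fa_mult f ?g)"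
    using rep_lpa_class [OF f] rep_lpa_class [OF g] by (intro lpa_cong_mult_right) auto
  also have "lpa_cong (fa_mult f ?g) (fa_mult f g)"
    using rep_lpa_class [OF g] f by (intro lpa_cong_mult_left) auto
  finally show ?thesis unfolding lpa_mult_def by (rule lpa_class_eq)
qed

lemma lpa_class_sum_in_comp_prod:
  assumes "finite P" and "\<And>m. m \<in> P \<Longrightarrow> A m \<in> C \<and> B m \<in> C \<and> cls (A m) \<in> X \<and> cls (B m) \<in> Y"
  shows "cls (fa_sum P (\<lambda>m. fa_mult (A m) (B m))) \<in> comp_prod_lpa X Y"
  using assms
proof (induction P rule: finite_induct)
  case empty
  then show ?case by (simp add: comp_prod_def lpa_zero_def [symmetric] add_subgroup_gen.asg_zero)
next
  case (insert x F)
  let ?CP = "comp_prod_lpa X Y"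
  let ?F = "fa_sum F (\<lambda>m. fa_mult (A m) (B m))"
  have x: "A x \<in> C" "B x \<in> C" "cls (A x) \<in> X" "cls (B x) \<in> Y"
    and F: "?F \<in> C" "cls ?F \<in> ?CP"
    using insert by (auto intro!: fa_sum_carrier fa_mult_carrier)
  have "lpa_mult V Ed s r (cls (A x)) (cls (B x)) \<in> ?CP"
    unfolding comp_prod_def using x by (intro add_subgroup_gen.asg_gen) blast
  then have "lpa_add V Ed s r (cls (fa_mult (A x) (B x))) (cls ?F) \<in> ?CP"
    using F(2) unfolding comp_prod_def lpa_mult_class [OF x(1,2)] by (rule add_subgroup_gen.asg_add)
  then show ?case
    using insert.hyps x F by (simp add: fa_sum_insert lpa_add_class fa_mult_carrier)
qed

definition word_cong :: "'r::ring_1 \<Rightarrow> ('v, 'e) gen list \<Rightarrow> ('v, 'e) gen list \<Rightarrow> bool" where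
  "word_cong c u w \<longleftrightarrow> lpa_cong (mono u c) (mono w c)"

definition word_null :: "'r::ring_1 \<Rightarrow> ('v, 'e) gen list \<Rightarrow> bool" where
  "word_null c u \<longleftrightarrow> mono u c \<in> J"

lemma word_cong_refl: "word_cong c u u"
  by (simp add: word_cong_def lpa_cong_refl)

lemma word_cong_sym: "word_cong c u w \<Longrightarrow> word_cong c w u"
  by (simp add: word_cong_def lpa_cong_sym)

lemma word_cong_trans [trans]: "word_cong c u w \<Longrightarrow> word_cong c w x \<Longrightarrow> word_cong c u x"
  unfolding word_cong_def by (rule lpa_cong_trans)

lemma word_null_cong: "word_cong c u w \<Longrightarrow> word_null c w \<Longrightarrow> word_null c u"
  unfolding word_cong_def word_null_def lpa_cong_zero_iff [symmetric] by (rule lpa_cong_trans)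

lemma word_cong_left:
  assumes "set x \<subseteq> G" "word_cong c u w"
  shows "word_cong c (x @ u) (x @ w)"
proof (cases "x = []")
  case False
  with assms have "lpa_cong (fa_mult (mono x 1) (mono u c)) (fa_mult (mono x 1) (mono w c))"
    by (intro lpa_cong_mult_left mono_carrier) (auto simp: word_cong_def)
  then show ?thesis by (simp add: fa_mult_mono word_cong_def)
qed (use assms in simp)

lemma word_cong_right:
  assumes "set y \<subseteq> G" "word_cong c u w"
  shows "word_cong c (u @ y) (w @ y)"
proof (cases "y = []")
  case False
  with assms have "lpa_cong (fa_mult (mono u c) (mono y 1)) (fa_mult (mono w c) (mono y 1))"
    by (intro lpa_cong_mult_right mono_carrier) (auto simp: word_cong_def)
  then show ?thesis by (simp add: fa_mult_mono word_cong_def)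
qed (use assms in simp)

lemma word_cong_context:
  "set x \<subseteq> G \<Longrightarrow> set y \<subseteq> G \<Longrightarrow> word_cong c u w \<Longrightarrow> word_cong c (x @ u @ y) (x @ w @ y)"
  using word_cong_left word_cong_right by (metis append_assoc)

lemma word_null_context:
  assumes "set x \<subseteq> G" "set y \<subseteq> G" "word_null c u"
  shows "word_null c (x @ u @ y)"
proof -
  have "word_null c (x @ u)"
  proof (cases "x = []")
    case False
    with assms have "fa_mult (mono x 1) (mono u c) \<in> J"
      by (intro lpa_ideal.li_lmult mono_carrier) (auto simp: word_null_def)
    then show ?thesis by (simp add: fa_mult_mono word_null_def)
  qed (use assms in simp)
  then show ?thesis
  proof (cases "y = []")
    case False
    assume "word_null c (x @ u)"
    with assms False have "fa_mult (mono (x @ u) c) (mono y 1) \<in> J"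
      by (intro lpa_ideal.li_rmult mono_carrier) (auto simp: word_null_def)
    then show ?thesis by (simp add: fa_mult_mono word_null_def)
  qed simp
qed

lemma relation_word_cong:
  fixes c :: "'r::ring_1"
  assumes "fa_sub (mono u (1::'r)) (mono w 1) \<in> lpa_rels V Ed s r" "set x \<subseteq> G" "set y \<subseteq> G"
  shows "word_cong c (x @ u @ y) (x @ w @ y)"
proof -
  have "lpa_cong (mono u (1::'r)) (mono w 1)"
    using assms(1) unfolding lpa_cong_def by (rule lpa_ideal.li_rel)
  then have "word_cong c u w"
    unfolding word_cong_def mono_eq_lsmul [of _ c] by (rule lpa_cong_lsmul)
  with assms(2,3) show ?thesis by (rule word_cong_context)
qed

lemma relation_word_null:
  fixes c :: "'r::ring_1"
  assumes "fa_sub (mono u (1::'r)) fa_zero \<in> lpa_rels V Ed s r" "set x \<subseteq> G" "set y \<subseteq> G"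
  shows "word_null c (x @ u @ y)"
proof -
  have "lpa_cong (mono u (1::'r)) fa_zero"
    using assms(1) unfolding lpa_cong_def by (rule lpa_ideal.li_rel)
  then have "mono u (1::'r) \<in> J"
    by (simp add: lpa_cong_zero_iff)
  then have "word_null c u"
    unfolding word_null_def mono_eq_lsmul [of _ c] by (rule lpa_ideal.li_lsmul)
  with assms(2,3) show ?thesis by (rule word_null_context)
qed

lemma lpa_rels_memberI:
  shows "v \<in> V \<Longrightarrow> fa_sub (mono [GV v, GV v] 1) (mono [GV v] 1) \<in> lpa_rels V Ed s r"
    and "v \<in> V \<Longrightarrow> v' \<in> V \<Longrightarrow> v \<noteq> v' \<Longrightarrow> fa_sub (mono [GV v, GV v'] 1) fa_zero \<in> lpa_rels V Ed s r"
    and "a \<in> Ed \<Longrightarrow> fa_sub (mono [GV (s a), GE a] 1) (mono [GE a] 1) \<in> lpa_rels V Ed s r"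
    and "a \<in> Ed \<Longrightarrow> fa_sub (mono [GE a, GV (r a)] 1) (mono [GE a] 1) \<in> lpa_rels V Ed s r"
    and "a \<in> Ed \<Longrightarrow> fa_sub (mono [GV (r a), GS a] 1) (mono [GS a] 1) \<in> lpa_rels V Ed s r"
    and "a \<in> Ed \<Longrightarrow> fa_sub (mono [GS a, GV (s a)] 1) (mono [GS a] 1) \<in> lpa_rels V Ed s r"
    and "a \<in> Ed \<Longrightarrow> fa_sub (mono [GS a, GE a] 1) (mono [GV (r a)] 1) \<in> lpa_rels V Ed s r"
    and "a \<in> Ed \<Longrightarrow> b \<in> Ed \<Longrightarrow> a \<noteq> b \<Longrightarrow> fa_sub (mono [GS a, GE b] 1) fa_zero \<in> lpa_rels V Ed s r"
  unfolding lpa_rels_def by (blast | (intro UnI1; force) | (rule UnI1, rule UnI2, force))+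

lemma gens_simps [simp]: "GV v \<in> G \<longleftrightarrow> v \<in> V" "GE a \<in> G \<longleftrightarrow> a \<in> Ed" "GS a \<in> G \<longleftrightarrow> a \<in> Ed"
  by (auto simp: gens_def)

lemma edge_source_in_V [simp]: "a \<in> Ed \<Longrightarrow> s a \<in> V"
  using source_in_V by auto

lemma vertex_idem_cong:
  "v \<in> V \<Longrightarrow> set x \<subseteq> G \<Longrightarrow> set y \<subseteq> G \<Longrightarrow> word_cong c (x @ GV v # GV v # y) (x @ GV v # y)"
  using relation_word_cong [OF lpa_rels_memberI(1)] by simp

lemma vertex_orth_null:
  "v \<in> V \<Longrightarrow> v' \<in> V \<Longrightarrow> v \<noteq> v' \<Longrightarrow> set x \<subseteq> G \<Longrightarrow> set y \<subseteq> G \<Longrightarrow> word_null c (x @ GV v # GV v' # y)"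
  using relation_word_null [OF lpa_rels_memberI(2)] by simp

lemma source_edge_cong:
  "a \<in> Ed \<Longrightarrow> set x \<subseteq> G \<Longrightarrow> set y \<subseteq> G \<Longrightarrow> word_cong c (x @ GV (s a) # GE a # y) (x @ GE a # y)"
  using relation_word_cong [OF lpa_rels_memberI(3)] by simp

lemma edge_range_cong:
  "a \<in> Ed \<Longrightarrow> set x \<subseteq> G \<Longrightarrow> set y \<subseteq> G \<Longrightarrow> word_cong c (x @ GE a # GV (r a) # y) (x @ GE a # y)"
  using relation_word_cong [OF lpa_rels_memberI(4)] by simp

lemma range_ghost_cong:
  "a \<in> Ed \<Longrightarrow> set x \<subseteq> G \<Longrightarrow> set y \<subseteq> G \<Longrightarrow> word_cong c (x @ GV (r a) # GS a # y) (x @ GS a # y)"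
  using relation_word_cong [OF lpa_rels_memberI(5)] by simp

lemma ghost_source_cong:
  "a \<in> Ed \<Longrightarrow> set x \<subseteq> G \<Longrightarrow> set y \<subseteq> G \<Longrightarrow> word_cong c (x @ GS a # GV (s a) # y) (x @ GS a # y)"
  using relation_word_cong [OF lpa_rels_memberI(6)] by simp

lemma ghost_edge_cong:
  "a \<in> Ed \<Longrightarrow> set x \<subseteq> G \<Longrightarrow> set y \<subseteq> G \<Longrightarrow> word_cong c (x @ GS a # GE a # y) (x @ GV (r a) # y)"
  using relation_word_cong [OF lpa_rels_memberI(7)] by simp

lemma ghost_edge_orth_null:
  "a \<in> Ed \<Longrightarrow> b \<in> Ed \<Longrightarrow> a \<noteq> b \<Longrightarrow> set x \<subseteq> G \<Longrightarrow> set y \<subseteq> G \<Longrightarrow> word_null c (x @ GS a # GE b # y)"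
  using relation_word_null [OF lpa_rels_memberI(8)] by simp

section \<open>Path words modulo the relations\<close>

lemma path_word_gens [simp]: "gpath a \<Longrightarrow> set (p_word a) \<subseteq> G"
  by (cases a) auto

lemma path_ghost_word_gens [simp]: "gpath a \<Longrightarrow> set (p_ghost_word a) \<subseteq> G"
  by (cases a) auto

lemma path_source_in_V [simp]: "gpath a \<Longrightarrow> p_source s a \<in> V"
  by (cases a) (simp_all add: subset_iff)

lemma ghost_edges_cong:
  "gpath (PE es) \<Longrightarrow> word_cong c (rev (map GS es) @ map GE es) [GV (r (last es))]"
proof (induction es)
  case (Cons a es)
  show ?case
  proof (cases es)
    case Nil
    then show ?thesis using Cons.prems ghost_edge_cong [of a "[]" "[]"] by simp
  next
    case (Cons b l)
    with Cons.prems have a: "a \<in> Ed" "r a = s b" "gpath (PE es)"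
      by (metis is_path_Cons_Cons)+
    let ?X = "rev (map GS es)"
    have gens: "set ?X \<subseteq> G" "set (map GE es) \<subseteq> G"
      using path_ghost_word_gens [OF a(3)] path_word_gens [OF a(3)] by simp_all
    have "word_cong c (?X @ GS a # GE a # map GE es) (?X @ GV (s b) # GE b # map GE l)"
      using ghost_edge_cong [OF a(1) gens] a(2) Cons by simp
    also have "word_cong c \<dots> (?X @ map GE es)"
      using source_edge_cong [of b ?X "map GE l"] gens Cons by simp
    also have "word_cong c \<dots> [GV (r (last es))]"
      using Cons.IH a(3) by simp
    finally show ?thesis using Cons by simp
  qed
qed simp

lemma ghost_path_cong:
  assumes "gpath a"
  shows "word_cong c (p_ghost_word a @ p_word a) [GV (p_range r a)]"
  using assms vertex_idem_cong [of _ "[]" "[]"] ghost_edges_cong by (cases a) simp_all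

lemma path_range_cong:
  assumes "gpath a"
  shows "word_cong c (p_word a @ [GV (p_range r a)]) (p_word a)"
proof (cases a)
  case (PV v)
  then show ?thesis using assms vertex_idem_cong [of v "[]" "[]"] by simp
next
  case (PE es)
  with assms obtain es' e where "es = es' @ [e]" by (cases es rule: rev_cases) auto
  with PE assms show ?thesis using edge_range_cong [of e "map GE es'" "[]"] by force
qed

lemma range_ghost_path_cong:
  assumes "gpath a"
  shows "word_cong c (GV (p_range r a) # p_ghost_word a) (p_ghost_word a)"
proof (cases a)
  case (PV v)
  then show ?thesis using assms vertex_idem_cong [of v "[]" "[]"] by simp
next
  case (PE es)
  with assms obtain es' e where "es = es' @ [e]" by (cases es rule: rev_cases) auto
  with PE assms show ?thesis using range_ghost_cong [of e "[]" "rev (map GS es')"] by force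
qed

lemma source_path_cong:
  assumes "gpath a"
  shows "word_cong c (GV (p_source s a) # p_word a) (p_word a)"
proof (cases a)
  case (PV v)
  then show ?thesis using assms vertex_idem_cong [of v "[]" "[]"] by simp
next
  case (PE es)
  with assms obtain e es' where "es = e # es'" by (cases es) auto
  with PE assms show ?thesis using source_edge_cong [of e "[]" "map GE es'"] by force
qed

lemma ghost_path_source_cong:
  assumes "gpath a"
  shows "word_cong c (p_ghost_word a @ [GV (p_source s a)]) (p_ghost_word a)"
proof (cases a)
  case (PV v)
  then show ?thesis using assms vertex_idem_cong [of v "[]" "[]"] by simp
next
  case (PE es)
  with assms obtain e es' where "es = e # es'" by (cases es) auto
  with PE assms show ?thesis using ghost_source_cong [of e "rev (map GS es')" "[]"] by force
qed

lemma path_Cons_tail: "gpath (PE (a # l)) \<Longrightarrow> l \<noteq> [] \<Longrightarrow> r a = s (hd l) \<and> gpath (PE l)"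
  by (cases l) (auto simp: is_path_Cons_Cons simp del: is_path.simps)

lemma incomparable_edges_null:
  "gpath (PE es) \<Longrightarrow> gpath (PE es') \<Longrightarrow> \<nexists>t. es' = es @ t \<Longrightarrow> \<nexists>t. es = es' @ t
   \<Longrightarrow> word_null c (rev (map GS es) @ map GE es')"
proof (induction es arbitrary: es')
  case (Cons a x)
  obtain b y where es': "es' = b # y" using Cons.prems(2) by (cases es') auto
  have ab: "a \<in> Ed" "b \<in> Ed" and gens: "set (rev (map GS x)) \<subseteq> G" "set (map GE y) \<subseteq> G"
    using Cons.prems es' by auto
  show ?case
  proof (cases "a = b")
    case False
    then show ?thesis using ghost_edge_orth_null [OF ab False gens] es' by simp
  next
    case True
    with Cons.prems es' have "x \<noteq> []" "y \<noteq> []" and incomparable: "\<nexists>t. y = x @ t" "\<nexists>t. x = y @ t"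
      by auto
    then obtain d z where y: "y = d # z" by (cases y) auto
    have paths: "gpath (PE x)" "gpath (PE y)" and "r b = s d"
      using path_Cons_tail [OF Cons.prems(1) \<open>x \<noteq> []\<close>]
        path_Cons_tail [of b y] Cons.prems(2) es' y by simp_all
    then have "word_cong c (rev (map GS x) @ GS a # GE a # map GE y) (rev (map GS x) @ GV (s d) # GE d # map GE z)"
      using ghost_edge_cong [OF ab(1) gens] True y by simp
    also have "word_cong c \<dots> (rev (map GS x) @ map GE y)"
      using source_edge_cong [of d "rev (map GS x)" "map GE z"] gens y by simp
    finally show ?thesis
      using Cons.IH [OF paths incomparable] es' True by (auto intro: word_null_cong)
  qed
qed simp

lemma incomparable_paths_null:
  assumes "gpath a" "gpath b" "\<not> path_prefix s a b" "\<not> path_prefix s b a"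
  shows "word_null c (p_ghost_word a @ p_word b)"
proof (cases a; cases b)
  fix v v' assume "a = PV v" "b = PV v'"
  then show ?thesis using assms vertex_orth_null [of v v' "[]" "[]"] by simp
next
  fix v es assume ab: "a = PV v" "b = PE es"
  have "word_null c ([] @ GV v # GV (p_source s b) # p_word b)"
    using assms ab path_source_in_V [OF assms(2)] by (intro vertex_orth_null) auto
  moreover have "word_cong c ([GV v] @ (GV (p_source s b) # p_word b) @ []) ([GV v] @ p_word b @ [])"
    using assms ab by (intro word_cong_context source_path_cong) auto
  ultimately show ?thesis using ab by (auto intro: word_null_cong dest: word_cong_sym)
next
  fix es v assume ab: "a = PE es" "b = PV v"
  have "word_null c (p_ghost_word a @ GV (p_source s a) # GV v # [])"
    using assms ab path_source_in_V [OF assms(1)] by (intro vertex_orth_null) auto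
  moreover have "word_cong c ([] @ (p_ghost_word a @ [GV (p_source s a)]) @ [GV v]) ([] @ p_ghost_word a @ [GV v])"
    using assms ab by (intro word_cong_context ghost_path_source_cong) auto
  ultimately show ?thesis using ab by (auto intro: word_null_cong dest: word_cong_sym)
next
  fix es es' assume "a = PE es" "b = PE es'"
  then show ?thesis using assms incomparable_edges_null [of es es'] by simp
qed

lemma prefix_path_word:
  assumes "gpath a" "gpath b" "path_prefix s a b"
  obtains t t' where "set t \<subseteq> G" "set t' \<subseteq> G"
    "word_cong c (p_word a @ t) (p_word b)" "word_cong c (t' @ p_ghost_word a) (p_ghost_word b)"
proof (cases a; cases b)
  fix v v' assume "a = PV v" "b = PV v'"
  then show thesis using assms that [of "[]" "[]"] by (simp add: word_cong_refl)
next
  fix v es assume ab: "a = PV v" "b = PE es"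
  have "word_cong c (p_word a @ p_word b) (p_word b)" "word_cong c (p_ghost_word b @ p_ghost_word a) (p_ghost_word b)"
    using assms ab source_path_cong [OF assms(2)] ghost_path_source_cong [OF assms(2)] by simp_all
  then show thesis using assms(2) that [of "p_word b" "p_ghost_word b"] by simp
next
  fix es v assume "a = PE es" "b = PV v"
  then show thesis using assms by simp
next
  fix es es' assume ab: "a = PE es" "b = PE es'"
  with assms obtain t where "es' = es @ t" "set t \<subseteq> Ed" by auto
  then show thesis using ab that [of "map GE t" "rev (map GS t)"] by (force simp: word_cong_refl)
qed

lemma path_ghost_prefix_cong:
  assumes "gpath a" "gpath b" "path_prefix s a b"
  shows "word_cong c (p_word a @ p_ghost_word a @ p_word b) (p_word b)"
proof -
  obtain t where t: "set t \<subseteq> G" "word_cong c (p_word a @ t) (p_word b)"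
    using prefix_path_word [OF assms] .
  have gens: "set (p_word a) \<subseteq> G" "set (p_ghost_word a) \<subseteq> G" using assms(1) by simp_all
  have "word_cong c (p_word a @ p_ghost_word a @ p_word b) (p_word a @ (p_ghost_word a @ p_word a) @ t)"
    using word_cong_left [OF _ word_cong_sym [OF t(2)], of "p_word a @ p_ghost_word a"] gens by simp
  also have "word_cong c \<dots> (p_word a @ [GV (p_range r a)] @ t)"
    using word_cong_context [OF gens(1) t(1) ghost_path_cong [OF assms(1)]] .
  also have "word_cong c \<dots> (p_word a @ t)"
    using word_cong_right [OF t(1) path_range_cong [OF assms(1)]] by simp
  finally show ?thesis using t(2) by (rule word_cong_trans)
qed

lemma ghost_prefix_path_cong:
  assumes "gpath a" "gpath b" "path_prefix s a b"
  shows "word_cong c (p_ghost_word b @ p_word a @ p_ghost_word a) (p_ghost_word b)"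
proof -
  obtain t' where t': "set t' \<subseteq> G" "word_cong c (t' @ p_ghost_word a) (p_ghost_word b)"
    using prefix_path_word [OF assms] .
  have gens: "set (p_word a) \<subseteq> G" "set (p_ghost_word a) \<subseteq> G" using assms(1) by simp_all
  have "word_cong c (p_ghost_word b @ p_word a @ p_ghost_word a) (t' @ (p_ghost_word a @ p_word a) @ p_ghost_word a)"
    using word_cong_right [OF _ word_cong_sym [OF t'(2)], of "p_word a @ p_ghost_word a"] gens by simp
  also have "word_cong c \<dots> (t' @ [GV (p_range r a)] @ p_ghost_word a)"
    using word_cong_context [OF t'(1) gens(2) ghost_path_cong [OF assms(1)]] .
  also have "word_cong c \<dots> (t' @ p_ghost_word a)"
    using word_cong_left [OF t'(1) range_ghost_path_cong [OF assms(1)]] by simp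
  finally show ?thesis using t'(2) by (rule word_cong_trans)
qed

lemma path_ghost_path_cong:
  assumes "gpath \<mu>" "gpath \<eta>" "p_range r \<mu> = p_range r \<eta>" "set y \<subseteq> G"
  shows "word_cong c (p_word \<mu> @ p_ghost_word \<eta> @ p_word \<eta> @ y) (p_word \<mu> @ y)"
proof -
  have "word_cong c (p_word \<mu> @ (p_ghost_word \<eta> @ p_word \<eta>) @ y) (p_word \<mu> @ [GV (p_range r \<mu>)] @ y)"
    using word_cong_context [OF path_word_gens [OF assms(1)] assms(4) ghost_path_cong [OF assms(2)]] assms(3)
    by simp
  also have "word_cong c \<dots> (p_word \<mu> @ y)"
    using word_cong_right [OF assms(4) path_range_cong [OF assms(1)]] by simp
  finally show ?thesis by simp
qed

section \<open>Local units\<close>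

lemma path_prefix_refl: "gpath a \<Longrightarrow> path_prefix s a a"
  by (cases a) auto

lemma path_prefix_trans:
  "gpath a \<Longrightarrow> gpath b \<Longrightarrow> path_prefix s a b \<Longrightarrow> path_prefix s b c \<Longrightarrow> path_prefix s a c"
  by (cases a; cases b; cases c) auto

lemma path_prefix_linear:
  "gpath a \<Longrightarrow> gpath b \<Longrightarrow> gpath c \<Longrightarrow> path_prefix s a c \<Longrightarrow> path_prefix s b c
   \<Longrightarrow> path_prefix s a b \<or> path_prefix s b a"
  by (cases a; cases b; cases c) (auto simp: append_eq_append_conv2)

lemma path_prefix_length: "gpath a \<Longrightarrow> gpath b \<Longrightarrow> path_prefix s a b \<Longrightarrow> a \<noteq> b \<Longrightarrow> p_length a < p_length b"
  by (cases a; cases b) auto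

definition minimal_paths :: "('v, 'e) path set \<Rightarrow> ('v, 'e) path set" where
  "minimal_paths K = {m \<in> K. \<forall>k\<in>K. path_prefix s k m \<longrightarrow> k = m}"

lemma minimal_paths_subset: "minimal_paths K \<subseteq> K"
  unfolding minimal_paths_def by blast

lemma finite_minimal_paths: "finite K \<Longrightarrow> finite (minimal_paths K)"
  using minimal_paths_subset by (rule finite_subset)

lemma minimal_paths_below:
  assumes "\<And>k. k \<in> K \<Longrightarrow> gpath k" "k \<in> K"
  shows "\<exists>m\<in>minimal_paths K. path_prefix s m k"
  using assms(2)
proof (induction "p_length k" arbitrary: k rule: less_induct)
  case less
  show ?case
  proof (cases "k \<in> minimal_paths K")
    case True
    then show ?thesis using path_prefix_refl [OF assms(1) [OF less.prems]] by blast
  next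
    case False
    then obtain k' where k': "k' \<in> K" "path_prefix s k' k" "k' \<noteq> k"
      using less.prems unfolding minimal_paths_def by blast
    then have "p_length k' < p_length k"
      using path_prefix_length assms(1) less.prems by blast
    with k'(1) obtain m where m: "m \<in> minimal_paths K" "path_prefix s m k'"
      using less.hyps by blast
    moreover have "gpath m" "gpath k'"
      using m(1) k'(1) assms(1) minimal_paths_subset by blast+
    ultimately show ?thesis
      using path_prefix_trans k'(2) by blast
  qed
qed

lemma minimal_paths_incomparable:
  assumes "\<And>k. k \<in> K \<Longrightarrow> gpath k" "\<mu> \<in> K"
    and "m0 \<in> minimal_paths K" "path_prefix s m0 \<mu>" "m \<in> minimal_paths K" "m \<noteq> m0"
  shows "\<not> path_prefix s m \<mu> \<and> \<not> path_prefix s \<mu> m"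
proof -
  have paths: "gpath m" "gpath m0" "gpath \<mu>"
    using assms(1) assms(2) assms(3,5) [THEN subsetD [OF minimal_paths_subset]] by blast+
  have "\<not> path_prefix s m m0" "\<not> path_prefix s m0 m"
    using assms(3,5,6) minimal_paths_subset unfolding minimal_paths_def by blast+
  moreover have "path_prefix s m m0 \<or> path_prefix s m0 m" if "path_prefix s m \<mu>"
    using path_prefix_linear [OF paths that assms(4)] .
  moreover have "path_prefix s m0 m" if "path_prefix s \<mu> m"
    using path_prefix_trans [OF paths(2,3) assms(4) that] .
  ultimately show ?thesis by blast
qed

lemma path_projection_mult:
  fixes c :: "'r::ring_1"
  assumes "finite K" "\<And>k. k \<in> K \<Longrightarrow> gpath k" "\<mu> \<in> K" "set y \<subseteq> G"
  shows "lpa_cong (fa_mult (path_projection (minimal_paths K)) (mono (p_word \<mu> @ y) c)) (mono (p_word \<mu> @ y) c)"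
proof -
  obtain m0 where m0: "m0 \<in> minimal_paths K" "path_prefix s m0 \<mu>"
    using minimal_paths_below [OF assms(2,3)] by blast
  have paths: "gpath m" if "m \<in> minimal_paths K" for m
    using that assms(2) minimal_paths_subset by blast
  have "lpa_cong (fa_sum (minimal_paths K) (\<lambda>m. mono (p_word m @ p_ghost_word m @ p_word \<mu> @ y) c)) (mono (p_word \<mu> @ y) c)"
  proof (rule lpa_cong_sum_single [OF finite_minimal_paths [OF assms(1)] m0(1)])
    fix m assume "m \<in> minimal_paths K" "m \<noteq> m0"
    then have "word_null c (p_ghost_word m @ p_word \<mu>)"
      using minimal_paths_incomparable [OF assms(2,3) m0] paths assms(2,3)
      by (intro incomparable_paths_null) auto
    then have "word_null c (p_word m @ (p_ghost_word m @ p_word \<mu>) @ y)"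
      using paths \<open>m \<in> minimal_paths K\<close> assms(4) by (intro word_null_context) auto
    then show "mono (p_word m @ p_ghost_word m @ p_word \<mu> @ y) c \<in> J"
      by (simp add: word_null_def)
  next
    have "word_cong c ((p_word m0 @ p_ghost_word m0 @ p_word \<mu>) @ y) (p_word \<mu> @ y)"
      using path_ghost_prefix_cong [OF paths [OF m0(1)] assms(2) [OF assms(3)] m0(2)] assms(4)
      by (rule word_cong_right [rotated])
    then show "lpa_cong (mono (p_word m0 @ p_ghost_word m0 @ p_word \<mu> @ y) c) (mono (p_word \<mu> @ y) c)"
      by (simp add: word_cong_def)
  qed
  then show ?thesis
    by (simp add: path_projection_def fa_mult_sum_left fa_mult_mono)
qed

lemma mult_path_projection:
  fixes c :: "'r::ring_1"
  assumes "finite K" "\<And>k. k \<in> K \<Longrightarrow> gpath k" "\<eta> \<in> K" "set y \<subseteq> G"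
  shows "lpa_cong (fa_mult (mono (y @ p_ghost_word \<eta>) c) (path_projection (minimal_paths K))) (mono (y @ p_ghost_word \<eta>) c)"
proof -
  obtain m0 where m0: "m0 \<in> minimal_paths K" "path_prefix s m0 \<eta>"
    using minimal_paths_below [OF assms(2,3)] by blast
  have paths: "gpath m" if "m \<in> minimal_paths K" for m
    using that assms(2) minimal_paths_subset by blast
  have "lpa_cong (fa_sum (minimal_paths K) (\<lambda>m. mono (y @ p_ghost_word \<eta> @ p_word m @ p_ghost_word m) c)) (mono (y @ p_ghost_word \<eta>) c)"
  proof (rule lpa_cong_sum_single [OF finite_minimal_paths [OF assms(1)] m0(1)])
    fix m assume "m \<in> minimal_paths K" "m \<noteq> m0"
    then have "word_null c (p_ghost_word \<eta> @ p_word m)"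
      using minimal_paths_incomparable [OF assms(2,3) m0] paths assms(2,3)
      by (intro incomparable_paths_null) auto
    then have "word_null c (y @ (p_ghost_word \<eta> @ p_word m) @ p_ghost_word m)"
      using paths \<open>m \<in> minimal_paths K\<close> assms(4) by (intro word_null_context) auto
    then show "mono (y @ p_ghost_word \<eta> @ p_word m @ p_ghost_word m) c \<in> J"
      by (simp add: word_null_def)
  next
    have "word_cong c (y @ p_ghost_word \<eta> @ p_word m0 @ p_ghost_word m0) (y @ p_ghost_word \<eta>)"
      using ghost_prefix_path_cong [OF paths [OF m0(1)] assms(2) [OF assms(3)] m0(2)] assms(4)
      by (rule word_cong_left [rotated])
    then show "lpa_cong (mono (y @ p_ghost_word \<eta> @ p_word m0 @ p_ghost_word m0) c) (mono (y @ p_ghost_word \<eta>) c)"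
      by (simp add: word_cong_def)
  qed
  then show ?thesis
    by (simp add: path_projection_def fa_mult_sum_right fa_mult_mono)
qed

definition homogeneous_pair ::
  "('v \<Rightarrow> 'i brandt) \<Rightarrow> ('e \<Rightarrow> 'i brandt) \<Rightarrow> 'i brandt \<Rightarrow> ('v, 'e) path \<Rightarrow> ('v, 'e) path \<Rightarrow> bool" where
  "homogeneous_pair wv we \<sigma> \<mu> \<eta> \<longleftrightarrow> \<sigma> \<noteq> BZero \<and> gpath \<mu> \<and> gpath \<eta> \<and> p_range r \<mu> = p_range r \<eta> \<and>
      bmult (p_weight wv we \<mu>) (binv (p_weight wv we \<eta>)) = \<sigma>"

lemma homogeneous_pair_swap:
  "homogeneous_pair wv we \<sigma> \<mu> \<eta> \<Longrightarrow> homogeneous_pair wv we (binv \<sigma>) \<eta> \<mu>"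
proof -
  assume hom: "homogeneous_pair wv we \<sigma> \<mu> \<eta>"
  then have "binv \<sigma> = bmult (p_weight wv we \<eta>) (binv (p_weight wv we \<mu>))"
    unfolding homogeneous_pair_def using binv_bmult_binv by blast
  moreover have "binv \<sigma> \<noteq> BZero"
    using hom unfolding homogeneous_pair_def by (cases \<sigma>) simp_all
  ultimately show ?thesis
    using hom unfolding homogeneous_pair_def by simp
qed

lemma homogeneous_pair_in_span:
  fixes c :: "'r::ring_1"
  assumes "homogeneous_pair wv we \<sigma> \<mu> \<eta>"
  shows "mono (p_word \<mu> @ p_ghost_word \<eta>) c \<in> lpa_span V Ed s r wv we \<sigma>"
proof -
  have "fa_add (mono (p_word \<mu> @ p_ghost_word \<eta>) c) fa_zero \<in> lpa_span V Ed s r wv we \<sigma>"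
    using assms unfolding homogeneous_pair_def by (intro lpa_span.ls_step lpa_span.ls_zero) auto
  moreover have "fa_add f fa_zero = f" for f :: "('v, 'e, 'r) fa"
    by (simp add: fa_add_def fa_zero_def)
  ultimately show ?thesis by simp
qed

lemma lpa_span_decomp:
  "f \<in> lpa_span V Ed s r wv we \<sigma> \<Longrightarrow> \<exists>n M H c.
     f = fa_sum {..<n::nat} (\<lambda>i. mono (p_word (M i) @ p_ghost_word (H i)) (c i)) \<and>
     (\<forall>i<n. homogeneous_pair wv we \<sigma> (M i) (H i))"
proof (induction rule: lpa_span.induct)
  case ls_zero
  show ?case by (rule exI [of _ 0]) simp
next
  case (ls_step \<mu> \<eta> f c)
  then obtain n M H cs
    where f: "f = fa_sum {..<n::nat} (\<lambda>i. mono (p_word (M i) @ p_ghost_word (H i)) (cs i))"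
      and hom: "\<forall>i<n. homogeneous_pair wv we \<sigma> (M i) (H i)"
    by blast
  let ?M = "M(n := \<mu>)" and ?H = "H(n := \<eta>)" and ?c = "cs(n := c)"
  have "fa_sum {..<n} (\<lambda>i. mono (p_word (?M i) @ p_ghost_word (?H i)) (?c i)) = f"
    unfolding f by (rule fa_sum_cong) simp
  then have "fa_add (mono (p_word \<mu> @ p_ghost_word \<eta>) c) f =
      fa_sum {..<Suc n} (\<lambda>i. mono (p_word (?M i) @ p_ghost_word (?H i)) (?c i))"
    by (simp add: lessThan_Suc fa_sum_insert)
  moreover have "\<forall>i<Suc n. homogeneous_pair wv we \<sigma> (?M i) (?H i)"
    using hom ls_step.hyps by (auto simp: homogeneous_pair_def less_Suc_eq)
  ultimately show ?case by blast
qed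

lemma p_word_not_Nil: "gpath a \<Longrightarrow> p_word a \<noteq> []"
  by (cases a) auto

lemma lpa_span_carrier: "f \<in> lpa_span V Ed s r wv we \<sigma> \<Longrightarrow> f \<in> C"
proof (induction rule: lpa_span.induct)
  case (ls_step \<mu> \<eta> f c)
  then have "mono (p_word \<mu> @ p_ghost_word \<eta>) c \<in> C"
    by (intro mono_carrier) (auto simp: p_word_not_Nil)
  with ls_step show ?case by (blast intro: fa_add_carrier)
qed simp

lemma path_projection_carrier:
  "finite P \<Longrightarrow> (\<And>m. m \<in> P \<Longrightarrow> gpath m) \<Longrightarrow> path_projection P \<in> C"
  unfolding path_projection_def by (intro fa_sum_carrier mono_carrier) (auto simp: p_word_not_Nil)

lemma path_projection_in_comp_prod:
  assumes "finite P" "\<forall>m\<in>P. \<exists>\<eta>. homogeneous_pair wv we \<tau> m \<eta>"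
  shows "cls (path_projection P :: ('v, 'e, 'r::ring_1) fa)
    \<in> comp_prod_lpa (lpa_comp V Ed s r wv we \<tau>) (lpa_comp V Ed s r wv we (binv \<tau>))"
proof -
  obtain h where h: "\<And>m. m \<in> P \<Longrightarrow> homogeneous_pair wv we \<tau> m (h m)"
    using assms(2) by metis
  define A :: "('v, 'e) path \<Rightarrow> ('v, 'e, 'r) fa" where "A m = mono (p_word m @ p_ghost_word (h m)) 1" for m
  define B :: "('v, 'e) path \<Rightarrow> ('v, 'e, 'r) fa" where "B m = mono (p_word (h m) @ p_ghost_word m) 1" for m
  have spans: "A m \<in> lpa_span V Ed s r wv we \<tau>" "B m \<in> lpa_span V Ed s r wv we (binv \<tau>)" if "m \<in> P" for m
    unfolding A_def B_def
    using h [OF that] by (auto intro: homogeneous_pair_in_span homogeneous_pair_swap)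
  have "cls (fa_sum P (\<lambda>m. fa_mult (A m) (B m)))
      \<in> comp_prod_lpa (lpa_comp V Ed s r wv we \<tau>) (lpa_comp V Ed s r wv we (binv \<tau>))"
    using assms(1) spans spans [THEN lpa_span_carrier] unfolding lpa_comp_def
    by (intro lpa_class_sum_in_comp_prod) auto
  moreover have "lpa_cong (fa_sum P (\<lambda>m. fa_mult (A m) (B m))) (path_projection P)"
    unfolding path_projection_def A_def B_def fa_mult_mono
  proof (intro lpa_cong_sum [OF assms(1)])
    fix m assume "m \<in> P"
    with h have "word_cong 1 (p_word m @ p_ghost_word (h m) @ p_word (h m) @ p_ghost_word m)
        (p_word m @ p_ghost_word m)"
      by (intro path_ghost_path_cong) (auto simp: homogeneous_pair_def)
    then show "lpa_cong (mono ((p_word m @ p_ghost_word (h m)) @ p_word (h m) @ p_ghost_word m) (1 * 1))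
        (mono (p_word m @ p_ghost_word m) (1::'r))"
      by (simp add: word_cong_def)
  qed
  ultimately show ?thesis by (simp add: lpa_class_eq)
qed

lemma lpa_span_left_unit:
  fixes f :: "('v, 'e, 'r::ring_1) fa"
  assumes "f \<in> lpa_span V Ed s r wv we \<sigma>"
  shows "\<exists>e\<in>comp_prod_lpa (lpa_comp V Ed s r wv we \<sigma>) (lpa_comp V Ed s r wv we (binv \<sigma>)).
    lpa_mult V Ed s r e (cls f) = cls f"
proof -
  obtain n M H c where f: "f = fa_sum {..<n::nat} (\<lambda>i. mono (p_word (M i) @ p_ghost_word (H i)) (c i))"
    and hom: "\<forall>i<n. homogeneous_pair wv we \<sigma> (M i) (H i)"
    using lpa_span_decomp [OF assms] by blast
  define K where "K = M ` {..<n}"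
  have K: "finite K" "\<And>k. k \<in> K \<Longrightarrow> gpath k"
    using hom unfolding K_def homogeneous_pair_def by auto
  let ?P = "minimal_paths K"
  have "\<forall>m\<in>?P. \<exists>\<eta>. homogeneous_pair wv we \<sigma> m \<eta>"
    using hom minimal_paths_subset unfolding K_def by blast
  then have unit: "cls (path_projection ?P :: ('v, 'e, 'r) fa)
      \<in> comp_prod_lpa (lpa_comp V Ed s r wv we \<sigma>) (lpa_comp V Ed s r wv we (binv \<sigma>))"
    by (rule path_projection_in_comp_prod [OF finite_minimal_paths [OF K(1)]])
  have carrier: "path_projection ?P \<in> C"
    using K minimal_paths_subset by (intro path_projection_carrier finite_minimal_paths) auto
  have cong: "lpa_cong (fa_mult (path_projection ?P) f) f"
    unfolding f fa_mult_sum_right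
  proof (rule lpa_cong_sum)
    fix i assume "i \<in> {..<n}"
    with hom have "M i \<in> K" "set (p_ghost_word (H i)) \<subseteq> G"
      unfolding K_def homogeneous_pair_def by auto
    with K show "lpa_cong (fa_mult (path_projection ?P) (mono (p_word (M i) @ p_ghost_word (H i)) (c i)))
        (mono (p_word (M i) @ p_ghost_word (H i)) (c i))"
      by (rule path_projection_mult)
  qed simp
  have "lpa_mult V Ed s r (cls (path_projection ?P)) (cls f) = cls f"
    unfolding lpa_mult_class [OF carrier lpa_span_carrier [OF assms]] using cong by (rule lpa_class_eq)
  with unit show ?thesis ..
qed

lemma lpa_span_right_unit:
  fixes f :: "('v, 'e, 'r::ring_1) fa"
  assumes "f \<in> lpa_span V Ed s r wv we \<sigma>"
  shows "\<exists>e\<in>comp_prod_lpa (lpa_comp V Ed s r wv we (binv \<sigma>)) (lpa_comp V Ed s r wv we \<sigma>).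
    lpa_mult V Ed s r (cls f) e = cls f"
proof -
  obtain n M H c where f: "f = fa_sum {..<n::nat} (\<lambda>i. mono (p_word (M i) @ p_ghost_word (H i)) (c i))"
    and hom: "\<forall>i<n. homogeneous_pair wv we \<sigma> (M i) (H i)"
    using lpa_span_decomp [OF assms] by blast
  define K where "K = H ` {..<n}"
  have K: "finite K" "\<And>k. k \<in> K \<Longrightarrow> gpath k"
    using hom unfolding K_def homogeneous_pair_def by auto
  let ?P = "minimal_paths K"
  have "\<forall>m\<in>?P. \<exists>\<mu>. homogeneous_pair wv we (binv \<sigma>) m \<mu>"
    using hom minimal_paths_subset homogeneous_pair_swap unfolding K_def by blast
  then have "cls (path_projection ?P :: ('v, 'e, 'r) fa)
      \<in> comp_prod_lpa (lpa_comp V Ed s r wv we (binv \<sigma>)) (lpa_comp V Ed s r wv we (binv (binv \<sigma>)))"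
    by (rule path_projection_in_comp_prod [OF finite_minimal_paths [OF K(1)]])
  then have unit: "cls (path_projection ?P :: ('v, 'e, 'r) fa)
      \<in> comp_prod_lpa (lpa_comp V Ed s r wv we (binv \<sigma>)) (lpa_comp V Ed s r wv we \<sigma>)"
    by simp
  have carrier: "path_projection ?P \<in> C"
    using K minimal_paths_subset by (intro path_projection_carrier finite_minimal_paths) auto
  have cong: "lpa_cong (fa_mult f (path_projection ?P)) f"
    unfolding f fa_mult_sum_left
  proof (rule lpa_cong_sum)
    fix i assume "i \<in> {..<n}"
    with hom have "H i \<in> K" "set (p_word (M i)) \<subseteq> G"
      unfolding K_def homogeneous_pair_def by auto
    with K show "lpa_cong (fa_mult (mono (p_word (M i) @ p_ghost_word (H i)) (c i)) (path_projection ?P))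
        (mono (p_word (M i) @ p_ghost_word (H i)) (c i))"
      by (rule mult_path_projection)
  qed simp
  have "lpa_mult V Ed s r (cls f) (cls (path_projection ?P)) = cls f"
    unfolding lpa_mult_class [OF lpa_span_carrier [OF assms] carrier] using cong by (rule lpa_class_eq)
  with unit show ?thesis ..
qed

lemma lpa_comp_local_units:
  fixes x :: "('v, 'e, 'r::ring_1) fa set"
  assumes "x \<in> lpa_comp V Ed s r wv we \<sigma>"
  shows "(\<exists>e\<in>comp_prod_lpa (lpa_comp V Ed s r wv we \<sigma>) (lpa_comp V Ed s r wv we (binv \<sigma>)).
           lpa_mult V Ed s r e x = x) \<and>
         (\<exists>e'\<in>comp_prod_lpa (lpa_comp V Ed s r wv we (binv \<sigma>)) (lpa_comp V Ed s r wv we \<sigma>).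
           lpa_mult V Ed s r x e' = x)"
proof -
  obtain f :: "('v, 'e, 'r) fa" where f: "f \<in> lpa_span V Ed s r wv we \<sigma>" and "x = cls f"
    using assms unfolding lpa_comp_def by blast
  then show ?thesis using lpa_span_left_unit [OF f] lpa_span_right_unit [OF f] by simp
qed

end

theorem theorem5p4:
  fixes V :: "'v set" and Ed :: "'e set" and s r :: "'e \<Rightarrow> 'v"
    and wv :: "'v \<Rightarrow> 'i brandt" and we :: "'e \<Rightarrow> 'i brandt"
  assumes "s ` Ed \<subseteq> V" and "r ` Ed \<subseteq> V"
    and "canonical_weight V Ed s r wv we"
  shows "nearly_eps_graded bmult BZero binv
           (lpa_add V Ed s r) (lpa_mult V Ed s r) (lpa_neg V Ed s r)
           (lpa_zero V Ed s r :: ('v, 'e, 'r::ring_1) fa set)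
           (lpa_comp V Ed s r wv we)"
proof -
  interpret lpa_graph V Ed s r
    using assms(1) by unfold_locales
  show ?thesis
    unfolding nearly_eps_graded_def
    using bmult_cancellative bmult_LRI lpa_comp_local_units by blast
qed

end
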